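(* Let $S$ be an $E$-unitary inverse semigroup, $A$ a semilattice of groups, and $\Lambda=(\alpha,\lambda,f)$, $\Lambda'=(\alpha',\lambda',f')$ Sieben twisted $S$-module structures on $A$. If $\Lambda$ is equivalent to $\Lambda'$, then the corresponding twisted partial actions $\Theta=\Theta^\Lambda$ and $\Theta'=\Theta^{\Lambda'}$ of $\mathcal G(S)$ on $A$ are equivalent.
   Context: A semilattice of groups is an inverse semigroup $A$ with central idempotents; $A_e=\{a: aa^{-1}=a^{-1}a=e\}$. $\mathcal G(S)=S/\sigma$, $\sigma$ the minimum group congruence; $E$-unitary: $e\le s$, $e\in E(S)$ imply $s\in E(S)$. A twisted $S$-module structure $(\alpha,\lambda,f)$: $\alpha:E(S)\to E(A)$ isomorphism, $\lambda_s$ relatively invertible endomorphisms of $A$ (there are $\bar\varphi$, $e_\varphi\in E(A)$ with $\bar\varphi\varphi(a)=e_\varphi a$, $\varphi\bar\varphi(a)=\varphi(e_\varphi)a$, $e_\varphi$ identity of $\bar\varphi(A)$, $\varphi(e_\varphi)$ identity of $\varphi(A)$), $f(s,t)\in A_{\alpha(stt^{-1}s^{-1})}$, with (i) $\lambda_e(a)=\alpha(e)a$; (ii) $\lambda_s(\alpha(e))=\alpha(ses^{-1})$; (iii) $\lambda_s\lambda_t(a)=f(s,t)\lambda_{st}(a)f(s,t)^{-1}$; (iv) $f(se,e)=\alpha(ses^{-1})$, $f(e,es)=\alpha(ess^{-1})$; (v) $\lambda_s(f(t,u))f(s,tu)=f(s,t)f(st,u)$; Sieben: also $f(s,e)=\alpha(ses^{-1})$,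 $f(e,s)=\alpha(ess^{-1})$. Equivalence of structures: $\alpha'=\alpha$ and there is $g:S\to A$, $g(s)\in A_{\alpha(ss^{-1})}$, with $\lambda'_s(a)=g(s)\lambda_s(a)g(s)^{-1}$ and $f'(s,t)g(st)=g(s)\lambda_s(g(t))f(s,t)$. $\Theta^\Lambda=(\theta,w)$: for $x\in\mathcal G(S)$, $D_x=\bigsqcup_{s\in x}A_{\alpha(ss^{-1})}$; $\theta_x(a)=\lambda_s(a)$ for $a\in D_{x^{-1}}$ with $s\in x$ the unique element with $\alpha(s^{-1}s)=aa^{-1}$; $w_{x,y}a=f(s,s^{-1}t)a$, $aw_{x,y}=af(s,s^{-1}t)$ for $a\in D_xD_{xy}$ with $s\in x$, $t\in xy$ unique such that $\alpha(ss^{-1})=\alpha(tt^{-1})=aa^{-1}$; this is a twisted partial action. Multipliers of a semigroup $T$: pairs $(L,R)$ of maps with $L(st)=L(s)t$, $R(st)=sR(t)$, $sL(t)=R(s)t$, written $ws$, $sw$; monoid $\mathcal M(T)$ with unit group $\mathcal U(\mathcal M(T))$. Two twisted partial actions $(\theta,w)$, $(\theta',w')$ of a group on $A$ (with domains $D_x$, $D'_x$) are equivalent if $D'_x=D_x$ and there exist $\varepsilon_x\in\mathcal U(\mathcal M(D_x))$ with $\theta'_x(s)=\varepsilon_x\theta_x(s)\varepsilon_x^{-1}$ for $s\in D_{x^{-1}}$ and $\theta'_x(s)w'_{x,y}\varepsilon_{xy}=\varepsilon_x\theta_x(s\varepsilon_y)w_{x,y}$ for $s\in D_{x^{-1}}D_y$.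 *)

theory Defs
  imports Main
begin

definition is_inverse_semigroup :: "('s \<Rightarrow> 's \<Rightarrow> 's) \<Rightarrow> bool" where
  "is_inverse_semigroup m \<longleftrightarrow>
     (\<forall>a b c. m (m a b) c = m a (m b c)) \<and>
     (\<forall>s. \<exists>!t. m (m s t) s = s \<and> m (m t s) t = t)"

definition sinv :: "('s \<Rightarrow> 's \<Rightarrow> 's) \<Rightarrow> 's \<Rightarrow> 's" where
  "sinv m s = (THE t. m (m s t) s = s \<and> m (m t s) t = t)"

definition idems :: "('s \<Rightarrow> 's \<Rightarrow> 's) \<Rightarrow> 's set" where
  "idems m = {e. m e e = e}"

definition semilattice_of_groups :: "('a \<Rightarrow> 'a \<Rightarrow> 'a) \<Rightarrow> bool" where
  "semilattice_of_groups m \<longleftrightarrow> is_inverse_semigroup m \<and> (\<forall>e\<in>idems m. \<forall>a. m e a = m a e)"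

definition grp_comp :: "('a \<Rightarrow> 'a \<Rightarrow> 'a) \<Rightarrow> 'a \<Rightarrow> 'a set" where
  "grp_comp m e = {a. m a (sinv m a) = e \<and> m (sinv m a) a = e}"

definition nat_le :: "('s \<Rightarrow> 's \<Rightarrow> 's) \<Rightarrow> 's \<Rightarrow> 's \<Rightarrow> bool" where
  "nat_le m s t \<longleftrightarrow> (\<exists>e\<in>idems m. s = m e t)"

definition E_unitary :: "('s \<Rightarrow> 's \<Rightarrow> 's) \<Rightarrow> bool" where
  "E_unitary m \<longleftrightarrow> is_inverse_semigroup m \<and>
     (\<forall>e s. e \<in> idems m \<and> nat_le m e s \<longrightarrow> s \<in> idems m)"

definition is_congruence :: "('s \<Rightarrow> 's \<Rightarrow> 's) \<Rightarrow> ('s \<times> 's) set \<Rightarrow> bool" where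
  "is_congruence m R \<longleftrightarrow> equiv UNIV R \<and>
     (\<forall>a b c. (a, b) \<in> R \<longrightarrow> (m c a, m c b) \<in> R \<and> (m a c, m b c) \<in> R)"

definition group_congruence :: "('s \<Rightarrow> 's \<Rightarrow> 's) \<Rightarrow> ('s \<times> 's) set \<Rightarrow> bool" where
  "group_congruence m R \<longleftrightarrow> is_congruence m R \<and>
     (\<exists>u. \<forall>s. (m u s, s) \<in> R \<and> (m s u, s) \<in> R \<and> (\<exists>t. (m s t, u) \<in> R \<and> (m t s, u) \<in> R))"

definition min_group_cong :: "('s \<Rightarrow> 's \<Rightarrow> 's) \<Rightarrow> ('s \<times> 's) set" where
  "min_group_cong m = \<Inter> {R. group_congruence m R}"

definition GS :: "('s \<Rightarrow> 's \<Rightarrow> 's) \<Rightarrow> 's set set" where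
  "GS m = UNIV // min_group_cong m"

definition sclass :: "('s \<Rightarrow> 's \<Rightarrow> 's) \<Rightarrow> 's \<Rightarrow> 's set" where
  "sclass m s = min_group_cong m `` {s}"

definition GS_mult :: "('s \<Rightarrow> 's \<Rightarrow> 's) \<Rightarrow> 's set \<Rightarrow> 's set \<Rightarrow> 's set" where
  "GS_mult m x y = sclass m (m (SOME s. s \<in> x) (SOME t. t \<in> y))"

definition GS_inv :: "('s \<Rightarrow> 's \<Rightarrow> 's) \<Rightarrow> 's set \<Rightarrow> 's set" where
  "GS_inv m x = sclass m (sinv m (SOME s. s \<in> x))"

definition endo :: "('a \<Rightarrow> 'a \<Rightarrow> 'a) \<Rightarrow> ('a \<Rightarrow> 'a) \<Rightarrow> bool" where
  "endo m \<phi> \<longleftrightarrow> (\<forall>a b. \<phi> (m a b) = m (\<phi> a) (\<phi> b))"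

definition is_identity_of :: "('a \<Rightarrow> 'a \<Rightarrow> 'a) \<Rightarrow> 'a \<Rightarrow> 'a set \<Rightarrow> bool" where
  "is_identity_of m e B \<longleftrightarrow> e \<in> B \<and> (\<forall>b\<in>B. m e b = b \<and> m b e = b)"

definition rel_invertible :: "('a \<Rightarrow> 'a \<Rightarrow> 'a) \<Rightarrow> ('a \<Rightarrow> 'a) \<Rightarrow> bool" where
  "rel_invertible m \<phi> \<longleftrightarrow> endo m \<phi> \<and>
     (\<exists>\<phi>b e. endo m \<phi>b \<and> e \<in> idems m \<and>
        (\<forall>a. \<phi>b (\<phi> a) = m e a) \<and> (\<forall>a. \<phi> (\<phi>b a) = m (\<phi> e) a) \<and>
        is_identity_of m e (range \<phi>b) \<and> is_identity_of m (\<phi> e) (range \<phi>))"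

text \<open>Sieben twisted S-module structure $(\alpha,\lambda,f)$ on $A$
  (conditions (i)--(v) together with Sieben's extra normalisation).\<close>
definition sieben_twisted_module ::
  "('s \<Rightarrow> 's \<Rightarrow> 's) \<Rightarrow> ('a \<Rightarrow> 'a \<Rightarrow> 'a) \<Rightarrow> ('s \<Rightarrow> 'a) \<Rightarrow> ('s \<Rightarrow> 'a \<Rightarrow> 'a) \<Rightarrow> ('s \<Rightarrow> 's \<Rightarrow> 'a) \<Rightarrow> bool"
where
  "sieben_twisted_module mS mA \<alpha> lam f \<longleftrightarrow>
     bij_betw \<alpha> (idems mS) (idems mA) \<and>
     (\<forall>e\<in>idems mS. \<forall>e'\<in>idems mS. \<alpha> (mS e e') = mA (\<alpha> e) (\<alpha> e')) \<and>
     (\<forall>s. rel_invertible mA (lam s)) \<and>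
     (\<forall>s t. f s t \<in> grp_comp mA (\<alpha> (mS (mS s t) (mS (sinv mS t) (sinv mS s))))) \<and>
     (\<forall>e\<in>idems mS. \<forall>a. lam e a = mA (\<alpha> e) a) \<and>
     (\<forall>s. \<forall>e\<in>idems mS. lam s (\<alpha> e) = \<alpha> (mS (mS s e) (sinv mS s))) \<and>
     (\<forall>s t a. lam s (lam t a) = mA (mA (f s t) (lam (mS s t) a)) (sinv mA (f s t))) \<and>
     (\<forall>s. \<forall>e\<in>idems mS. f (mS s e) e = \<alpha> (mS (mS s e) (sinv mS s)) \<and>
                       f e (mS e s) = \<alpha> (mS (mS e s) (sinv mS s))) \<and>
     (\<forall>s t u. mA (lam s (f t u)) (f s (mS t u)) = mA (f s t) (f (mS s t) u)) \<and>
     (\<forall>s. \<forall>e\<in>idems mS. f s e = \<alpha> (mS (mS s e) (sinv mS s)) \<and>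
                       f e s = \<alpha> (mS (mS e s) (sinv mS s)))"

definition equiv_twisted_modules ::
  "('s \<Rightarrow> 's \<Rightarrow> 's) \<Rightarrow> ('a \<Rightarrow> 'a \<Rightarrow> 'a) \<Rightarrow>
   ('s \<Rightarrow> 'a) \<Rightarrow> ('s \<Rightarrow> 'a \<Rightarrow> 'a) \<Rightarrow> ('s \<Rightarrow> 's \<Rightarrow> 'a) \<Rightarrow>
   ('s \<Rightarrow> 'a) \<Rightarrow> ('s \<Rightarrow> 'a \<Rightarrow> 'a) \<Rightarrow> ('s \<Rightarrow> 's \<Rightarrow> 'a) \<Rightarrow> bool"
where
  "equiv_twisted_modules mS mA \<alpha> lam f \<alpha>' lam' f' \<longleftrightarrow>
     (\<forall>e\<in>idems mS. \<alpha>' e = \<alpha> e) \<and>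
     (\<exists>g. (\<forall>s. g s \<in> grp_comp mA (\<alpha> (mS s (sinv mS s)))) \<and>
          (\<forall>s a. lam' s a = mA (mA (g s) (lam s a)) (sinv mA (g s))) \<and>
          (\<forall>s t. mA (f' s t) (g (mS s t)) = mA (mA (g s) (lam s (g t))) (f s t)))"

definition Dom :: "('s \<Rightarrow> 's \<Rightarrow> 's) \<Rightarrow> ('a \<Rightarrow> 'a \<Rightarrow> 'a) \<Rightarrow> ('s \<Rightarrow> 'a) \<Rightarrow> 's set \<Rightarrow> 'a set" where
  "Dom mS mA \<alpha> x = (\<Union>s\<in>x. grp_comp mA (\<alpha> (mS s (sinv mS s))))"

definition theta ::
  "('s \<Rightarrow> 's \<Rightarrow> 's) \<Rightarrow> ('a \<Rightarrow> 'a \<Rightarrow> 'a) \<Rightarrow> ('s \<Rightarrow> 'a) \<Rightarrow> ('s \<Rightarrow> 'a \<Rightarrow> 'a) \<Rightarrow> 's set \<Rightarrow> 'a \<Rightarrow> 'a"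
where
  "theta mS mA \<alpha> lam x a =
     lam (THE s. s \<in> x \<and> \<alpha> (mS (sinv mS s) s) = mA a (sinv mA a)) a"

text \<open>A multiplier is represented as the pair (left action, right action).\<close>
definition wmult ::
  "('s \<Rightarrow> 's \<Rightarrow> 's) \<Rightarrow> ('a \<Rightarrow> 'a \<Rightarrow> 'a) \<Rightarrow> ('s \<Rightarrow> 'a) \<Rightarrow> ('s \<Rightarrow> 's \<Rightarrow> 'a) \<Rightarrow> 's set \<Rightarrow> 's set
     \<Rightarrow> ('a \<Rightarrow> 'a) \<times> ('a \<Rightarrow> 'a)"
where
  "wmult mS mA \<alpha> f x y =
     (let fv = (\<lambda>a. let s = (THE s. s \<in> x \<and> \<alpha> (mS s (sinv mS s)) = mA a (sinv mA a));
                       t = (THE t. t \<in> GS_mult mS x y \<and> \<alpha> (mS t (sinv mS t)) = mA a (sinv mA a))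
                   in f s (mS (sinv mS s) t))
      in (\<lambda>a. mA (fv a) a, \<lambda>a. mA a (fv a)))"

definition setmul :: "('a \<Rightarrow> 'a \<Rightarrow> 'a) \<Rightarrow> 'a set \<Rightarrow> 'a set \<Rightarrow> 'a set" where
  "setmul m B C = {m b c | b c. b \<in> B \<and> c \<in> C}"

definition is_multiplier :: "('a \<Rightarrow> 'a \<Rightarrow> 'a) \<Rightarrow> 'a set \<Rightarrow> ('a \<Rightarrow> 'a) \<times> ('a \<Rightarrow> 'a) \<Rightarrow> bool" where
  "is_multiplier m T w \<longleftrightarrow>
     (\<forall>s\<in>T. fst w s \<in> T \<and> snd w s \<in> T) \<and>
     (\<forall>s\<in>T. \<forall>t\<in>T. fst w (m s t) = m (fst w s) t \<and> snd w (m s t) = m s (snd w t) \<and>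
                     m s (fst w t) = m (snd w s) t)"

text \<open>$w$ is a unit of $\mathcal M(T)$ with inverse $w'$ (products of multipliers
  compose left actions and right actions; the identity is (id,id); equality on $T$).\<close>
definition is_unit_multiplier_with_inv ::
  "('a \<Rightarrow> 'a \<Rightarrow> 'a) \<Rightarrow> 'a set \<Rightarrow> ('a \<Rightarrow> 'a) \<times> ('a \<Rightarrow> 'a) \<Rightarrow> ('a \<Rightarrow> 'a) \<times> ('a \<Rightarrow> 'a) \<Rightarrow> bool"
where
  "is_unit_multiplier_with_inv m T w w' \<longleftrightarrow>
     is_multiplier m T w \<and> is_multiplier m T w' \<and>
     (\<forall>s\<in>T. fst w (fst w' s) = s \<and> fst w' (fst w s) = s \<and>
            snd w (snd w' s) = s \<and> snd w' (snd w s) = s)"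

definition equiv_tpa ::
  "('a \<Rightarrow> 'a \<Rightarrow> 'a) \<Rightarrow> 'g set \<Rightarrow> ('g \<Rightarrow> 'g \<Rightarrow> 'g) \<Rightarrow> ('g \<Rightarrow> 'g) \<Rightarrow>
   ('g \<Rightarrow> 'a set) \<Rightarrow> ('g \<Rightarrow> 'a \<Rightarrow> 'a) \<Rightarrow> ('g \<Rightarrow> 'g \<Rightarrow> ('a \<Rightarrow> 'a) \<times> ('a \<Rightarrow> 'a)) \<Rightarrow>
   ('g \<Rightarrow> 'a set) \<Rightarrow> ('g \<Rightarrow> 'a \<Rightarrow> 'a) \<Rightarrow> ('g \<Rightarrow> 'g \<Rightarrow> ('a \<Rightarrow> 'a) \<times> ('a \<Rightarrow> 'a)) \<Rightarrow> bool"
where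
  "equiv_tpa mA G gm gi D th w D' th' w' \<longleftrightarrow>
     (\<forall>x\<in>G. D' x = D x) \<and>
     (\<exists>\<epsilon> \<epsilon>i. \<forall>x\<in>G.
        is_unit_multiplier_with_inv mA (D x) (\<epsilon> x) (\<epsilon>i x) \<and>
        (\<forall>s\<in>D (gi x). th' x s = snd (\<epsilon>i x) (fst (\<epsilon> x) (th x s))) \<and>
        (\<forall>y\<in>G. \<forall>s\<in>setmul mA (D (gi x)) (D y).
           snd (\<epsilon> (gm x y)) (snd (w' x y) (th' x s)) =
           fst (\<epsilon> x) (snd (w x y) (th x (snd (\<epsilon> y) s)))))"

end

theory Submission
  imports Defs
begin

text \<open>Since \<open>S\<close> is E-unitary, a \<open>\<sigma>\<close>-class \<open>x\<close> contains at most one element with a given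
  range idempotent, so \<open>D\<^sub>x\<close> is the disjoint union of the groups \<open>A\<^bsub>\<alpha>(s s\<^sup>-\<^sup>1)\<^esub>\<close>,
  \<open>s \<in> x\<close>, and \<open>\<theta>\<^sub>x\<close> and \<open>w\<^sub>x\<^sub>,\<^sub>y\<close> act componentwise through \<open>\<lambda>\<^sub>s\<close> and \<open>f\<close>.
  The cochain \<open>g\<close> relating the two module structures is \<open>\<alpha>\<close> on idempotents and satisfies
  \<open>g(e s) = \<alpha>(e s s\<^sup>-\<^sup>1) g(s)\<close>; hence the elements \<open>g(s)\<close>, \<open>s \<in> x\<close>, agree on overlaps and
  glue to a unit multiplier \<open>\<epsilon>\<^sub>x\<close> of \<open>D\<^sub>x\<close>, acting on the component of \<open>s\<close> as
  multiplication by \<open>g(s)\<close>. On each component the two conditions for equivalent twisted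
  partial actions then reduce to \<open>\<lambda>'\<^sub>s = g(s) \<lambda>\<^sub>s(-) g(s)\<^sup>-\<^sup>1\<close> and
  \<open>f'(s,t) g(s t) = g(s) \<lambda>\<^sub>s(g(t)) f(s,t)\<close>.\<close>

locale inverse_semigroup =
  fixes m :: "'a \<Rightarrow> 'a \<Rightarrow> 'a" (infixl "\<cdot>" 70)
  assumes inverse_semigroup: "is_inverse_semigroup m"
begin

abbreviation iv where "iv \<equiv> sinv m"
abbreviation E where "E \<equiv> idems m"

lemma assoc: "(a \<cdot> b) \<cdot> c = a \<cdot> (b \<cdot> c)"
  using inverse_semigroup unfolding is_inverse_semigroup_def by blast

lemma unique_inverse: "\<exists>!t. (s \<cdot> t) \<cdot> s = s \<and> (t \<cdot> s) \<cdot> t = t"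
  using inverse_semigroup unfolding is_inverse_semigroup_def by blast

lemma inv_right_cancel [simp]: "s \<cdot> (iv s \<cdot> s) = s"
  and inv_left_cancel [simp]: "iv s \<cdot> (s \<cdot> iv s) = iv s"
  using theI'[OF unique_inverse[of s]] unfolding sinv_def by (simp_all add: assoc)

lemma inv_right_cancel' [simp]: "s \<cdot> (iv s \<cdot> (s \<cdot> z)) = s \<cdot> z"
  by (metis inv_right_cancel assoc)

lemma inv_left_cancel' [simp]: "iv s \<cdot> (s \<cdot> (iv s \<cdot> z)) = iv s \<cdot> z"
  by (metis inv_left_cancel assoc)

lemma inv_unique: assumes "s \<cdot> (t \<cdot> s) = s" "t \<cdot> (s \<cdot> t) = t" shows "t = iv s"
  using unique_inverse[of s] inv_right_cancel[of s] inv_left_cancel[of s] assms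
  by (metis assoc)

lemma idems_iff: "e \<in> E \<longleftrightarrow> e \<cdot> e = e"
  unfolding idems_def by simp

lemma idem_sq: "e \<in> E \<Longrightarrow> e \<cdot> e = e"
  by (simp add: idems_iff)

lemma idem_sq': "e \<in> E \<Longrightarrow> e \<cdot> (e \<cdot> z) = e \<cdot> z"
  by (metis idem_sq assoc)

lemma inv_inv [simp]: "iv (iv s) = s"
  by (rule inv_unique[symmetric]) simp_all

lemma idem_inv: "e \<in> E \<Longrightarrow> iv e = e"
  by (rule inv_unique[symmetric]) (simp_all add: idems_iff)

lemma range_idem [simp]: "s \<cdot> iv s \<in> E"
  unfolding idems_iff by (metis inv_right_cancel' assoc)

lemma domain_idem [simp]: "iv s \<cdot> s \<in> E"
  unfolding idems_iff by (metis inv_right_cancel assoc)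

text \<open>The classical argument: \<open>f x e\<close> with \<open>x = (e f)\<^sup>-\<^sup>1\<close> is an inverse of \<open>e f\<close>,
  hence equals \<open>x\<close>, which is thereby idempotent and self-inverse.\<close>
lemma idem_mult: assumes e: "e \<in> E" and f: "f \<in> E" shows "e \<cdot> f \<in> E"
proof -
  have ee: "e \<cdot> e = e" and ff: "f \<cdot> f = f" using e f idems_iff by auto
  define x where "x = iv (e \<cdot> f)"
  have 1: "e \<cdot> (f \<cdot> (x \<cdot> (e \<cdot> f))) = e \<cdot> f" unfolding x_def by (metis inv_right_cancel assoc)
  have 2: "x \<cdot> (e \<cdot> (f \<cdot> x)) = x" unfolding x_def by (metis inv_left_cancel assoc)
  have "f \<cdot> x \<cdot> e = iv (e \<cdot> f)"
  proof (rule inv_unique)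
    have "(e \<cdot> f) \<cdot> ((f \<cdot> x \<cdot> e) \<cdot> (e \<cdot> f)) = e \<cdot> ((f \<cdot> f) \<cdot> (x \<cdot> ((e \<cdot> e) \<cdot> f)))"
      by (simp add: assoc)
    then show "(e \<cdot> f) \<cdot> ((f \<cdot> x \<cdot> e) \<cdot> (e \<cdot> f)) = e \<cdot> f" using ee ff 1 by simp
    have "(f \<cdot> x \<cdot> e) \<cdot> ((e \<cdot> f) \<cdot> (f \<cdot> x \<cdot> e)) = f \<cdot> ((x \<cdot> ((e \<cdot> e) \<cdot> ((f \<cdot> f) \<cdot> x))) \<cdot> e)"
      by (simp add: assoc)
    then show "(f \<cdot> x \<cdot> e) \<cdot> ((e \<cdot> f) \<cdot> (f \<cdot> x \<cdot> e)) = f \<cdot> x \<cdot> e" using ee ff 2 by (simp add: assoc)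
  qed
  then have "f \<cdot> x \<cdot> e = x" unfolding x_def .
  then have "x \<cdot> x = x" using 2 by (metis assoc)
  then have "x \<in> E" using idems_iff by simp
  then have "e \<cdot> f = x" using idem_inv unfolding x_def by (metis inv_inv)
  then show ?thesis using \<open>x \<in> E\<close> by simp
qed

lemma idem_comm: assumes e: "e \<in> E" and f: "f \<in> E" shows "e \<cdot> f = f \<cdot> e"
proof -
  have "f \<cdot> e = iv (e \<cdot> f)"
    using idem_mult[OF e f] idem_mult[OF f e] idem_sq[OF e] idem_sq[OF f]
    by (intro inv_unique) (metis assoc idems_iff)+
  then show ?thesis using idem_inv[OF idem_mult[OF e f]] by simp
qed

lemma idem_left_comm: "e \<in> E \<Longrightarrow> f \<in> E \<Longrightarrow> e \<cdot> (f \<cdot> z) = f \<cdot> (e \<cdot> z)"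
  by (metis assoc idem_comm)

lemma idem_absorb:
  assumes "e \<in> E" "f \<in> E" shows "e \<cdot> f \<cdot> e = e \<cdot> f" "e \<cdot> f \<cdot> f = e \<cdot> f"
proof -
  have "e \<cdot> f \<cdot> e = e \<cdot> (e \<cdot> f)" using idem_comm[OF assms(2,1)] by (simp add: assoc)
  then show "e \<cdot> f \<cdot> e = e \<cdot> f" using idem_sq'[OF assms(1)] by simp
  show "e \<cdot> f \<cdot> f = e \<cdot> f" using idem_sq[OF assms(2)] by (simp add: assoc)
qed

lemma inv_mult: "iv (s \<cdot> t) = iv t \<cdot> iv s"
proof (rule inv_unique[symmetric])
  have c: "t \<cdot> iv t \<cdot> (iv s \<cdot> s) = iv s \<cdot> s \<cdot> (t \<cdot> iv t)" using idem_comm by simp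
  have "s \<cdot> t \<cdot> (iv t \<cdot> iv s \<cdot> (s \<cdot> t)) = s \<cdot> ((t \<cdot> iv t \<cdot> (iv s \<cdot> s)) \<cdot> t)" by (simp add: assoc)
  then show "s \<cdot> t \<cdot> (iv t \<cdot> iv s \<cdot> (s \<cdot> t)) = s \<cdot> t" unfolding c by (simp add: assoc)
  have "iv t \<cdot> iv s \<cdot> (s \<cdot> t \<cdot> (iv t \<cdot> iv s)) = iv t \<cdot> ((iv s \<cdot> s \<cdot> (t \<cdot> iv t)) \<cdot> iv s)"
    by (simp add: assoc)
  also have "\<dots> = iv t \<cdot> iv s" unfolding c[symmetric] by (simp add: assoc)
  finally show "iv t \<cdot> iv s \<cdot> (s \<cdot> t \<cdot> (iv t \<cdot> iv s)) = iv t \<cdot> iv s" .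
qed

lemma conj_idem: assumes "e \<in> E" shows "s \<cdot> e \<cdot> iv s \<in> E"
proof -
  have "s \<cdot> e \<cdot> iv s \<cdot> (s \<cdot> e \<cdot> iv s) = s \<cdot> (e \<cdot> ((iv s \<cdot> s) \<cdot> e)) \<cdot> iv s" by (simp add: assoc)
  also have "\<dots> = s \<cdot> e \<cdot> iv s"
    using idem_left_comm[OF assms domain_idem] idem_sq'[OF assms] by (simp add: assoc)
  finally show ?thesis by (simp add: idems_iff)
qed

lemma conj_idem_mult: assumes "e \<in> E" shows "s \<cdot> e \<cdot> iv s \<cdot> s = s \<cdot> e"
  using idem_comm[OF assms domain_idem[of s]] by (simp add: assoc)

lemma range_idem_left: assumes "e \<in> E" shows "e \<cdot> s \<cdot> iv (e \<cdot> s) = e \<cdot> (s \<cdot> iv s)"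
proof -
  have "e \<cdot> s \<cdot> iv (e \<cdot> s) = e \<cdot> ((s \<cdot> iv s) \<cdot> e)"
    using idem_inv[OF assms] by (simp add: inv_mult assoc)
  also have "\<dots> = e \<cdot> (s \<cdot> iv s)"
    by (metis assoc idem_comm[OF assms range_idem] idem_sq'[OF assms])
  finally show ?thesis .
qed

lemma range_idem_mult: "e \<in> E \<Longrightarrow> e \<cdot> (s \<cdot> iv s) = e \<Longrightarrow> e \<cdot> s \<cdot> iv (e \<cdot> s) = e"
  by (simp add: range_idem_left)

lemma endo_inv: assumes "endo m \<phi>" shows "\<phi> (iv a) = iv (\<phi> a)"
  using assms unfolding endo_def by (intro inv_unique) (metis inv_right_cancel, metis inv_left_cancel)

definition agree_on_idem :: "('a \<times> 'a) set" where
  "agree_on_idem = {(u, v). \<exists>e\<in>E. e \<cdot> u = e \<cdot> v}"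

lemma agree_on_idem_equiv: "equiv UNIV agree_on_idem"
proof (rule equivI)
  show "refl agree_on_idem" unfolding refl_on_def agree_on_idem_def using range_idem by blast
  show "sym agree_on_idem" unfolding sym_def agree_on_idem_def by (clarsimp, metis)
  show "trans agree_on_idem" unfolding trans_def agree_on_idem_def
  proof clarify
    fix u v w e f assume "e \<in> E" "e \<cdot> u = e \<cdot> v" "f \<in> E" "f \<cdot> v = f \<cdot> w"
    then have "f \<cdot> e \<in> E" "f \<cdot> e \<cdot> u = f \<cdot> e \<cdot> w"
      using idem_mult idem_left_comm by (simp_all add: assoc)
    then show "\<exists>g\<in>E. g \<cdot> u = g \<cdot> w" by blast
  qed
qed simp

lemma agree_on_idem_right_idem: "(s \<cdot> e, s) \<in> agree_on_idem" if "e \<in> E"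
proof -
  have "s \<cdot> e \<cdot> iv s \<cdot> (s \<cdot> e) = s \<cdot> e \<cdot> iv s \<cdot> s"
    by (simp only: assoc[symmetric] conj_idem_mult[OF that]) (simp add: assoc idem_sq[OF that])
  then show ?thesis unfolding agree_on_idem_def using conj_idem[OF that] by blast
qed

lemma agree_on_idem_left_idem: "e \<in> E \<Longrightarrow> (e \<cdot> s, s) \<in> agree_on_idem"
  unfolding agree_on_idem_def using idem_sq' by blast

lemma agree_on_idem_idems:
  assumes "e \<in> E" "f \<in> E" shows "(e, f) \<in> agree_on_idem"
proof -
  have "e \<cdot> f \<cdot> e = e \<cdot> f \<cdot> f" using idem_absorb[OF assms] by simp
  then show ?thesis unfolding agree_on_idem_def using idem_mult[OF assms] by blast
qed

lemma group_congruence_agree_on_idem: "group_congruence m agree_on_idem"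
  unfolding group_congruence_def is_congruence_def
proof (intro conjI allI impI)
  fix a b c assume "(a, b) \<in> agree_on_idem"
  then obtain e where e: "e \<in> E" "e \<cdot> a = e \<cdot> b" unfolding agree_on_idem_def by blast
  have "e \<cdot> (a \<cdot> c) = e \<cdot> (b \<cdot> c)" using e(2) by (simp add: assoc[symmetric])
  then show "(a \<cdot> c, b \<cdot> c) \<in> agree_on_idem" unfolding agree_on_idem_def using e(1) by blast
  have "c \<cdot> e \<cdot> iv c \<cdot> (c \<cdot> a) = c \<cdot> e \<cdot> iv c \<cdot> (c \<cdot> b)"
    by (simp only: assoc[symmetric] conj_idem_mult[OF e(1)]) (simp add: assoc e(2))
  then show "(c \<cdot> a, c \<cdot> b) \<in> agree_on_idem" unfolding agree_on_idem_def using conj_idem[OF e(1)] by blast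
next
  obtain e0 where e0: "e0 \<in> E" using range_idem by blast
  show "\<exists>u. \<forall>s. (u \<cdot> s, s) \<in> agree_on_idem \<and> (s \<cdot> u, s) \<in> agree_on_idem \<and>
      (\<exists>t. (s \<cdot> t, u) \<in> agree_on_idem \<and> (t \<cdot> s, u) \<in> agree_on_idem)"
  proof (intro exI allI conjI)
    fix s
    show "(e0 \<cdot> s, s) \<in> agree_on_idem" "(s \<cdot> e0, s) \<in> agree_on_idem"
      using agree_on_idem_left_idem agree_on_idem_right_idem e0 by blast+
    show "(s \<cdot> iv s, e0) \<in> agree_on_idem" "(iv s \<cdot> s, e0) \<in> agree_on_idem"
      using agree_on_idem_idems e0 by simp_all
  qed
qed (rule agree_on_idem_equiv)

lemma agree_on_idem_subset_group_congruence:
  assumes R: "group_congruence m R" shows "agree_on_idem \<subseteq> R"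
proof -
  from R obtain u where u: "\<And>s. (u \<cdot> s, s) \<in> R \<and> (s \<cdot> u, s) \<in> R \<and> (\<exists>t. (s \<cdot> t, u) \<in> R \<and> (t \<cdot> s, u) \<in> R)"
    unfolding group_congruence_def by blast
  have eq: "equiv UNIV R"
    and cong: "\<And>a b c. (a, b) \<in> R \<Longrightarrow> (c \<cdot> a, c \<cdot> b) \<in> R \<and> (a \<cdot> c, b \<cdot> c) \<in> R"
    using R unfolding group_congruence_def is_congruence_def by blast+
  have sym: "\<And>a b. (a, b) \<in> R \<Longrightarrow> (b, a) \<in> R" using eq unfolding equiv_def sym_def by blast
  have trans: "\<And>a b c. (a, b) \<in> R \<Longrightarrow> (b, c) \<in> R \<Longrightarrow> (a, c) \<in> R"
    using eq unfolding equiv_def trans_def by blast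
  have idem_unit: "(e, u) \<in> R" if e: "e \<in> E" for e
  proof -
    obtain t where t: "(t \<cdot> e, u) \<in> R" using u by blast
    then have "(t \<cdot> e \<cdot> e, u \<cdot> e) \<in> R" using cong by blast
    then have "(u, u \<cdot> e) \<in> R" using t idem_sq[OF e] sym trans by (metis assoc)
    then show ?thesis using u sym trans by blast
  qed
  have idem_left: "(e \<cdot> s, s) \<in> R" if "e \<in> E" for e s
    using cong[OF idem_unit[OF that]] u trans by blast
  show ?thesis
  proof
    fix p assume "p \<in> agree_on_idem"
    then obtain a b e where "p = (a, b)" "e \<in> E" "e \<cdot> a = e \<cdot> b" unfolding agree_on_idem_def by blast
    then show "p \<in> R" using idem_left sym trans by metis
  qed
qed

lemma min_group_cong_eq: "min_group_cong m = agree_on_idem"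
  unfolding min_group_cong_def
  using group_congruence_agree_on_idem agree_on_idem_subset_group_congruence by blast

lemma min_group_cong_iff: "(u, v) \<in> min_group_cong m \<longleftrightarrow> (\<exists>e\<in>E. e \<cdot> u = e \<cdot> v)"
  unfolding min_group_cong_eq agree_on_idem_def by simp

lemma min_group_cong_equiv: "equiv UNIV (min_group_cong m)"
  unfolding min_group_cong_eq by (rule agree_on_idem_equiv)

lemma min_group_cong_sym: "(u, v) \<in> min_group_cong m \<Longrightarrow> (v, u) \<in> min_group_cong m"
  using min_group_cong_equiv unfolding equiv_def sym_def by blast

lemma min_group_cong_trans:
  "(u, v) \<in> min_group_cong m \<Longrightarrow> (v, w) \<in> min_group_cong m \<Longrightarrow> (u, w) \<in> min_group_cong m"
  using min_group_cong_equiv unfolding equiv_def trans_def by blast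

lemma min_group_cong_mult:
  assumes "(a, b) \<in> min_group_cong m" "(c, d) \<in> min_group_cong m"
  shows "(a \<cdot> c, b \<cdot> d) \<in> min_group_cong m"
proof -
  have "is_congruence m (min_group_cong m)"
    using group_congruence_agree_on_idem unfolding min_group_cong_eq group_congruence_def by simp
  then have "(a \<cdot> c, b \<cdot> c) \<in> min_group_cong m" "(b \<cdot> c, b \<cdot> d) \<in> min_group_cong m"
    using assms unfolding is_congruence_def by blast+
  then show ?thesis using min_group_cong_trans by blast
qed

lemma min_group_cong_left_idem: "e \<in> E \<Longrightarrow> (s, e \<cdot> s) \<in> min_group_cong m"
  using agree_on_idem_left_idem min_group_cong_sym unfolding min_group_cong_eq by blast

lemma min_group_cong_right_idem: "e \<in> E \<Longrightarrow> (s, s \<cdot> e) \<in> min_group_cong m"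
  using agree_on_idem_right_idem min_group_cong_sym unfolding min_group_cong_eq by blast

lemma min_group_cong_inv:
  assumes "(u, v) \<in> min_group_cong m" shows "(iv u, iv v) \<in> min_group_cong m"
proof -
  obtain e where e: "e \<in> E" "e \<cdot> u = e \<cdot> v" using assms min_group_cong_iff by blast
  \<comment> \<open>With \<open>k = u\<^sup>-\<^sup>1 e u = v\<^sup>-\<^sup>1 e v\<close> we get \<open>u k = e u = e v = v k\<close>; now invert.\<close>
  have "s \<cdot> (iv s \<cdot> e \<cdot> s) = e \<cdot> s" for s
    by (simp only: assoc[symmetric] idem_comm[OF range_idem e(1)]) (simp add: assoc)
  then have "u \<cdot> (iv u \<cdot> e \<cdot> u) = e \<cdot> u" and "v \<cdot> (iv v \<cdot> e \<cdot> v) = e \<cdot> v" by blast+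
  moreover have "iv u \<cdot> e \<cdot> u = iv v \<cdot> e \<cdot> v"
    using e inv_mult[of e u] inv_mult[of e v] idem_inv[OF e(1)] by (metis assoc)
  ultimately have "iv (u \<cdot> (iv u \<cdot> e \<cdot> u)) = iv (v \<cdot> (iv u \<cdot> e \<cdot> u))" using e(2) by simp
  then have "(iv u \<cdot> e \<cdot> u) \<cdot> iv u = (iv u \<cdot> e \<cdot> u) \<cdot> iv v"
    using idem_inv[OF conj_idem[OF e(1), of "iv u", simplified]] by (simp add: inv_mult)
  then show ?thesis unfolding min_group_cong_iff using conj_idem[OF e(1), of "iv u"] by auto
qed

lemma sclass_iff: "t \<in> sclass m r \<longleftrightarrow> (r, t) \<in> min_group_cong m"
  unfolding sclass_def by simp

lemma sclass_in_GS: "sclass m r \<in> GS m"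
  unfolding sclass_def GS_def by (simp add: quotientI)

lemma GS_mult_in_GS: "GS_mult m x y \<in> GS m"
  unfolding GS_mult_def by (rule sclass_in_GS)

lemma GS_elim:
  assumes "x \<in> GS m" obtains r where "x = sclass m r"
  using assms unfolding GS_def quotient_def sclass_def by blast

lemma GS_related: "x \<in> GS m \<Longrightarrow> s \<in> x \<Longrightarrow> t \<in> x \<Longrightarrow> (s, t) \<in> min_group_cong m"
  by (metis GS_elim sclass_iff min_group_cong_sym min_group_cong_trans)

lemma GS_closed: "x \<in> GS m \<Longrightarrow> s \<in> x \<Longrightarrow> (s, t) \<in> min_group_cong m \<Longrightarrow> t \<in> x"
  by (metis GS_elim sclass_iff min_group_cong_trans)

lemma GS_some_mem: assumes "x \<in> GS m" shows "(SOME s. s \<in> x) \<in> x"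
proof -
  obtain r where "x = sclass m r" using assms by (rule GS_elim)
  then have "r \<in> x" using min_group_cong_equiv sclass_iff unfolding equiv_def refl_on_def by blast
  then show ?thesis by (rule someI)
qed

lemma GS_mult_mem:
  assumes "x \<in> GS m" "y \<in> GS m" "s \<in> x" "t \<in> y" shows "s \<cdot> t \<in> GS_mult m x y"
  unfolding GS_mult_def sclass_iff
  using assms GS_some_mem GS_related min_group_cong_mult by blast

lemma GS_inv_mem: assumes "x \<in> GS m" "t \<in> GS_inv m x" shows "iv t \<in> x"
proof -
  have "(SOME s. s \<in> x, iv t) \<in> min_group_cong m"
    using assms(2) min_group_cong_inv unfolding GS_inv_def sclass_iff by fastforce
  then show ?thesis using GS_closed assms(1) GS_some_mem by blast
qed

end

locale clifford_semigroup = inverse_semigroup +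
  assumes idem_central: "e \<in> E \<Longrightarrow> e \<cdot> a = a \<cdot> e"
begin

lemma idem_central': "e \<in> E \<Longrightarrow> a \<cdot> (e \<cdot> z) = e \<cdot> (a \<cdot> z)"
  by (metis assoc idem_central)

lemma range_eq_domain: "a \<cdot> iv a = iv a \<cdot> a"
proof -
  have "(iv a \<cdot> a) \<cdot> a = a" using idem_central[OF domain_idem[of a], of a] by simp
  then have 1: "(iv a \<cdot> a) \<cdot> (a \<cdot> iv a) = a \<cdot> iv a" by (simp only: assoc[symmetric])
  have "(a \<cdot> iv a) \<cdot> iv a = iv a" using idem_central[OF range_idem[of a], of "iv a"] by simp
  then have 2: "(a \<cdot> iv a) \<cdot> (iv a \<cdot> a) = iv a \<cdot> a" by (simp only: assoc[symmetric])
  from 1 2 show ?thesis using idem_comm[OF range_idem domain_idem] by simp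
qed

lemma grp_comp_iff: "a \<in> grp_comp m e \<longleftrightarrow> a \<cdot> iv a = e"
  unfolding grp_comp_def using range_eq_domain by auto

lemma grp_comp_idem: "a \<in> grp_comp m e \<Longrightarrow> e \<in> E"
  using grp_comp_iff by auto

lemma grp_comp_left_unit: "a \<in> grp_comp m e \<Longrightarrow> e \<cdot> a = a"
  using grp_comp_iff by (auto simp: assoc)

lemma grp_comp_right_unit: "a \<in> grp_comp m e \<Longrightarrow> a \<cdot> e = a"
  using grp_comp_iff range_eq_domain by (metis inv_right_cancel)

lemma grp_comp_right_unit': "a \<in> grp_comp m e \<Longrightarrow> a \<cdot> (e \<cdot> z) = a \<cdot> z"
  using grp_comp_right_unit assoc by metis

lemma grp_comp_inv: "a \<in> grp_comp m e \<Longrightarrow> iv a \<in> grp_comp m e"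
  using grp_comp_iff range_eq_domain by simp

lemma grp_comp_right_inv: "a \<in> grp_comp m e \<Longrightarrow> a \<cdot> iv a = e"
  using grp_comp_iff by simp

lemma grp_comp_left_inv: "a \<in> grp_comp m e \<Longrightarrow> iv a \<cdot> a = e"
  using grp_comp_iff range_eq_domain by simp

lemma grp_comp_right_inv': "a \<in> grp_comp m e \<Longrightarrow> a \<cdot> (iv a \<cdot> z) = e \<cdot> z"
  using grp_comp_right_inv assoc by metis

lemma grp_comp_left_inv': "a \<in> grp_comp m e \<Longrightarrow> iv a \<cdot> (a \<cdot> z) = e \<cdot> z"
  using grp_comp_left_inv assoc by metis

lemma grp_comp_mult:
  assumes a: "a \<in> grp_comp m e" and b: "b \<in> grp_comp m f"
  shows "a \<cdot> b \<in> grp_comp m (e \<cdot> f)"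
proof -
  have "a \<cdot> b \<cdot> iv (a \<cdot> b) = a \<cdot> (b \<cdot> iv b) \<cdot> iv a" by (simp add: inv_mult assoc)
  also have "\<dots> = a \<cdot> iv a \<cdot> f"
    using grp_comp_right_inv[OF b] idem_central[OF grp_comp_idem[OF b]] by (simp add: assoc)
  also have "\<dots> = e \<cdot> f" using grp_comp_right_inv[OF a] by simp
  finally show ?thesis using grp_comp_iff by simp
qed

lemma grp_comp_mult_same: "a \<in> grp_comp m e \<Longrightarrow> b \<in> grp_comp m e \<Longrightarrow> a \<cdot> b \<in> grp_comp m e"
  using grp_comp_mult grp_comp_idem idem_sq by metis

lemma grp_comp_idem_eq: "a \<in> grp_comp m e \<Longrightarrow> a \<cdot> a = a \<Longrightarrow> a = e"
  using grp_comp_iff idem_inv idems_iff by force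

lemma endo_grp_comp: "endo m \<phi> \<Longrightarrow> a \<in> grp_comp m e \<Longrightarrow> \<phi> a \<in> grp_comp m (\<phi> e)"
  unfolding grp_comp_iff using endo_inv by (metis endo_def)

lemma grp_comp_range: "a \<in> grp_comp m (a \<cdot> iv a)"
  by (simp add: grp_comp_iff)

lemma local_units_multiplier:
  assumes unit: "\<And>a. a \<in> T \<Longrightarrow> H a \<in> grp_comp m (a \<cdot> iv a)"
    and closed: "\<And>a. a \<in> T \<Longrightarrow> H a \<cdot> a \<in> T \<and> a \<cdot> H a \<in> T"
    and mult: "\<And>a b. a \<in> T \<Longrightarrow> b \<in> T \<Longrightarrow>
       H (a \<cdot> b) = a \<cdot> iv a \<cdot> (b \<cdot> iv b) \<cdot> H a \<and> H (a \<cdot> b) = a \<cdot> iv a \<cdot> (b \<cdot> iv b) \<cdot> H b"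
  shows "is_multiplier m T (\<lambda>a. H a \<cdot> a, \<lambda>a. a \<cdot> H a)"
  unfolding is_multiplier_def fst_conv snd_conv
proof (intro conjI ballI)
  fix a b assume a: "a \<in> T" and b: "b \<in> T"
  define p q where "p = a \<cdot> iv a" and "q = b \<cdot> iv b"
  have Ha: "H a \<in> grp_comp m p" and Hb: "H b \<in> grp_comp m q"
    unfolding p_def q_def using unit a b by blast+
  have ga: "a \<in> grp_comp m p" and gb: "b \<in> grp_comp m q"
    unfolding p_def q_def by (rule grp_comp_range)+
  have qE: "q \<in> E" using grp_comp_idem[OF gb] .
  have Hab: "H (a \<cdot> b) = p \<cdot> (q \<cdot> H a)" "H (a \<cdot> b) = p \<cdot> (q \<cdot> H b)"
    unfolding p_def q_def assoc using mult[OF a b, unfolded assoc] by blast+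
  have "H (a \<cdot> b) \<cdot> (a \<cdot> b) = p \<cdot> (H a \<cdot> (a \<cdot> (q \<cdot> b)))"
    unfolding Hab(1) by (simp add: assoc idem_central'[OF qE, symmetric])
  then show "H (a \<cdot> b) \<cdot> (a \<cdot> b) = H a \<cdot> a \<cdot> b"
    using grp_comp_left_unit[OF gb] grp_comp_left_unit[OF Ha] by (simp add: assoc[symmetric])
  have "a \<cdot> b \<cdot> H (a \<cdot> b) = a \<cdot> (p \<cdot> (b \<cdot> (q \<cdot> H b)))"
    unfolding Hab(2) using idem_central'[OF grp_comp_idem[OF ga]] by (simp add: assoc)
  then show "a \<cdot> b \<cdot> H (a \<cdot> b) = a \<cdot> (b \<cdot> H b)"
    using grp_comp_right_unit'[OF ga] grp_comp_right_unit'[OF gb] by simp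
  have "a \<cdot> (H b \<cdot> b) = a \<cdot> (p \<cdot> (q \<cdot> H b) \<cdot> b)"
    using grp_comp_right_unit'[OF ga] grp_comp_left_unit[OF Hb] by (simp add: assoc)
  also have "\<dots> = a \<cdot> (p \<cdot> (H a \<cdot> (q \<cdot> b)))"
    unfolding Hab(2)[symmetric] Hab(1) by (simp add: assoc idem_central'[OF qE, symmetric])
  also have "\<dots> = a \<cdot> H a \<cdot> b"
    using grp_comp_right_unit'[OF ga] grp_comp_left_unit[OF gb] by (simp add: assoc)
  finally show "a \<cdot> (H b \<cdot> b) = a \<cdot> H a \<cdot> b" .
qed (use closed in blast)+

end

locale E_unitary_semigroup = inverse_semigroup +
  assumes E_unitary: "E_unitary m"
begin

lemma idem_if_restriction_idem: "e \<in> E \<Longrightarrow> f \<in> E \<Longrightarrow> e = f \<cdot> s \<Longrightarrow> s \<in> E"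
  using E_unitary unfolding E_unitary_def nat_le_def by blast

lemma min_group_cong_inv_mult_idem:
  assumes "(u, v) \<in> min_group_cong m" shows "iv u \<cdot> v \<in> E"
proof -
  obtain e where e: "e \<in> E" "e \<cdot> u = e \<cdot> v" using assms min_group_cong_iff by blast
  let ?h = "iv u \<cdot> e \<cdot> u"
  have "?h \<cdot> (iv u \<cdot> v) = iv u \<cdot> (e \<cdot> (u \<cdot> iv u)) \<cdot> v" by (simp add: assoc)
  also have "\<dots> = iv u \<cdot> (u \<cdot> iv u) \<cdot> e \<cdot> v"
    unfolding idem_comm[OF e(1) range_idem[of u]] by (simp add: assoc)
  also have "\<dots> = iv u \<cdot> (e \<cdot> v)" by (simp add: assoc)
  also have "\<dots> = ?h" using e(2) by (simp add: assoc)
  finally show ?thesis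
    using idem_if_restriction_idem conj_idem[OF e(1), of "iv u"] by (metis inv_inv)
qed

lemma min_group_cong_range_unique:
  assumes "(u, v) \<in> min_group_cong m" "u \<cdot> iv u = v \<cdot> iv v" shows "u = v"
proof -
  have p: "iv u \<cdot> v \<in> E" using min_group_cong_inv_mult_idem assms(1) .
  have "iv v \<cdot> u = iv u \<cdot> v" using idem_inv[OF p] inv_mult by simp
  then have u: "u = v \<cdot> (iv u \<cdot> v)" using assms(2) by (metis assoc inv_right_cancel)
  have "v = u \<cdot> (iv u \<cdot> v)" using assms(2) by (metis assoc inv_right_cancel)
  also have "\<dots> = v \<cdot> (iv u \<cdot> v)" using u idem_sq[OF p] by (metis assoc)
  finally show ?thesis using u by simp
qed

lemma min_group_cong_domain_unique:
  assumes "(u, v) \<in> min_group_cong m" "iv u \<cdot> u = iv v \<cdot> v" shows "u = v"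
  using min_group_cong_range_unique[OF min_group_cong_inv[OF assms(1)]] assms(2) by (metis inv_inv)

lemma GS_restrictions_eq:
  assumes x: "x \<in> GS m" and s: "s \<in> x" and t: "t \<in> x"
  shows "s \<cdot> iv s \<cdot> (t \<cdot> iv t) \<cdot> s = s \<cdot> iv s \<cdot> (t \<cdot> iv t) \<cdot> t"
proof -
  let ?k = "s \<cdot> iv s \<cdot> (t \<cdot> iv t)"
  have kE: "?k \<in> E" using idem_mult[OF range_idem range_idem] .
  have "?k \<cdot> (s \<cdot> iv s) = ?k" "?k \<cdot> (t \<cdot> iv t) = ?k" by (rule idem_absorb; simp)+
  moreover have "(?k \<cdot> s, ?k \<cdot> t) \<in> min_group_cong m"
    using min_group_cong_left_idem[OF kE] GS_related[OF x s t]
    by (meson min_group_cong_sym min_group_cong_trans)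
  ultimately show ?thesis using min_group_cong_range_unique range_idem_mult[OF kE] by metis
qed

end

locale sieben_module = S: inverse_semigroup mS + A: clifford_semigroup mA
  for mS :: "'s \<Rightarrow> 's \<Rightarrow> 's" (infixl "\<cdot>" 70) and mA :: "'a \<Rightarrow> 'a \<Rightarrow> 'a" (infixl "\<odot>" 70) +
  fixes \<alpha> :: "'s \<Rightarrow> 'a" and lam :: "'s \<Rightarrow> 'a \<Rightarrow> 'a" and f :: "'s \<Rightarrow> 's \<Rightarrow> 'a"
  assumes sieben: "sieben_twisted_module mS mA \<alpha> lam f"
begin

lemma alpha_idem: "e \<in> S.E \<Longrightarrow> \<alpha> e \<in> A.E"
  using sieben bij_betw_apply unfolding sieben_twisted_module_def by metis

lemma alpha_inj: "e \<in> S.E \<Longrightarrow> e' \<in> S.E \<Longrightarrow> \<alpha> e = \<alpha> e' \<Longrightarrow> e = e'"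
  using sieben bij_betw_imp_inj_on inj_onD unfolding sieben_twisted_module_def by metis

lemma alpha_mult: "e \<in> S.E \<Longrightarrow> e' \<in> S.E \<Longrightarrow> \<alpha> (e \<cdot> e') = \<alpha> e \<odot> \<alpha> e'"
  using sieben unfolding sieben_twisted_module_def by blast

lemma lam_endo: "endo mA (lam s)"
  using sieben unfolding sieben_twisted_module_def rel_invertible_def by blast

lemma lam_mult: "lam s (a \<odot> b) = lam s a \<odot> lam s b"
  using lam_endo unfolding endo_def by blast

lemma lam_idem: "e \<in> S.E \<Longrightarrow> lam e a = \<alpha> e \<odot> a"
  using sieben unfolding sieben_twisted_module_def by blast

lemma lam_alpha: "e \<in> S.E \<Longrightarrow> lam s (\<alpha> e) = \<alpha> (s \<cdot> e \<cdot> S.iv s)"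
  using sieben unfolding sieben_twisted_module_def by blast

lemma f_grp_comp: "f s t \<in> grp_comp mA (\<alpha> (s \<cdot> t \<cdot> S.iv (s \<cdot> t)))"
  using sieben unfolding sieben_twisted_module_def S.inv_mult by blast

lemma f_idem_left: "e \<in> S.E \<Longrightarrow> f e s = \<alpha> (e \<cdot> s \<cdot> S.iv s)"
  using sieben unfolding sieben_twisted_module_def by blast

lemma lam_grp_comp:
  assumes "a \<in> grp_comp mA (\<alpha> (S.iv u \<cdot> u))" shows "lam u a \<in> grp_comp mA (\<alpha> (u \<cdot> S.iv u))"
proof -
  have "lam u (\<alpha> (S.iv u \<cdot> u)) = \<alpha> (u \<cdot> S.iv u)"
    using lam_alpha[OF S.domain_idem] by (simp add: S.assoc)
  then show ?thesis using A.endo_grp_comp[OF lam_endo[of u] assms] by simp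
qed

end

locale E_unitary_sieben_module = S: E_unitary_semigroup mS + sieben_module mS mA \<alpha> lam f
  for mS :: "'s \<Rightarrow> 's \<Rightarrow> 's" (infixl "\<cdot>" 70) and mA :: "'a \<Rightarrow> 'a \<Rightarrow> 'a" (infixl "\<odot>" 70)
    and \<alpha> lam f
begin

text \<open>Over an E-unitary \<open>S\<close>, the component of \<open>D\<^sub>x\<close> containing \<open>a\<close> is indexed by a unique
  element of the class \<open>x\<close>.\<close>
definition rep :: "'s set \<Rightarrow> 'a \<Rightarrow> 's" where
  "rep x a = (THE s. s \<in> x \<and> \<alpha> (s \<cdot> S.iv s) = a \<odot> A.iv a)"

lemma the_range_rep:
  assumes x: "x \<in> GS mS" and s: "s \<in> x"
  shows "(THE t. t \<in> x \<and> \<alpha> (t \<cdot> S.iv t) = \<alpha> (s \<cdot> S.iv s)) = s"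
proof (rule the_equality)
  fix t assume "t \<in> x \<and> \<alpha> (t \<cdot> S.iv t) = \<alpha> (s \<cdot> S.iv s)"
  then show "t = s"
    using alpha_inj[OF S.range_idem S.range_idem] S.min_group_cong_range_unique S.GS_related x s
    by metis
qed (use s in simp)

lemma the_domain_rep:
  assumes x: "x \<in> GS mS" and s: "s \<in> x"
  shows "(THE t. t \<in> x \<and> \<alpha> (S.iv t \<cdot> t) = \<alpha> (S.iv s \<cdot> s)) = s"
proof (rule the_equality)
  fix t assume "t \<in> x \<and> \<alpha> (S.iv t \<cdot> t) = \<alpha> (S.iv s \<cdot> s)"
  then show "t = s"
    using alpha_inj[OF S.domain_idem S.domain_idem] S.min_group_cong_domain_unique S.GS_related x s
    by metis
qed (use s in simp)

lemma rep_eq: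
  assumes "x \<in> GS mS" "s \<in> x" "a \<in> grp_comp mA (\<alpha> (s \<cdot> S.iv s))"
  shows "rep x a = s"
  unfolding rep_def using the_range_rep[OF assms(1,2)] A.grp_comp_right_inv[OF assms(3)] by simp

lemma Dom_iff: "a \<in> Dom mS mA \<alpha> x \<longleftrightarrow> (\<exists>s\<in>x. a \<in> grp_comp mA (\<alpha> (s \<cdot> S.iv s)))"
  unfolding Dom_def by simp

lemma DomI: "s \<in> x \<Longrightarrow> a \<in> grp_comp mA (\<alpha> (s \<cdot> S.iv s)) \<Longrightarrow> a \<in> Dom mS mA \<alpha> x"
  unfolding Dom_def by blast

lemma rep_in_class: "x \<in> GS mS \<Longrightarrow> a \<in> Dom mS mA \<alpha> x \<Longrightarrow> rep x a \<in> x"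
  using rep_eq Dom_iff by metis

lemma in_grp_comp_rep:
  "x \<in> GS mS \<Longrightarrow> a \<in> Dom mS mA \<alpha> x \<Longrightarrow> a \<in> grp_comp mA (\<alpha> (rep x a \<cdot> S.iv (rep x a)))"
  using rep_eq Dom_iff by metis

lemma theta_eq:
  assumes "x \<in> GS mS" "u \<in> x" "a \<in> grp_comp mA (\<alpha> (S.iv u \<cdot> u))"
  shows "theta mS mA \<alpha> L x a = L u a"
  unfolding theta_def using the_domain_rep[OF assms(1,2)] A.grp_comp_right_inv[OF assms(3)] by simp

lemma wmult_snd:
  assumes "x \<in> GS mS" "y \<in> GS mS" "s \<in> x" "t \<in> GS_mult mS x y"
    and "a \<in> grp_comp mA (\<alpha> (s \<cdot> S.iv s))" "a \<in> grp_comp mA (\<alpha> (t \<cdot> S.iv t))"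
  shows "snd (wmult mS mA \<alpha> F x y) a = a \<odot> F s (S.iv s \<cdot> t)"
  unfolding wmult_def Let_def
  using the_range_rep[OF assms(1,3)] the_range_rep[OF S.GS_mult_in_GS assms(4)]
    A.grp_comp_right_inv[OF assms(5)] A.grp_comp_right_inv[OF assms(6)] by simp

lemma range_alpha_rep:
  "x \<in> GS mS \<Longrightarrow> a \<in> Dom mS mA \<alpha> x \<Longrightarrow> \<alpha> (rep x a \<cdot> S.iv (rep x a)) = a \<odot> A.iv a"
  using A.grp_comp_right_inv[OF in_grp_comp_rep] by simp

lemma Dom_mult_closed:
  assumes x: "x \<in> GS mS" and a: "a \<in> Dom mS mA \<alpha> x" and b: "b \<in> Dom mS mA \<alpha> x"
  shows "a \<odot> b \<in> Dom mS mA \<alpha> x"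
proof -
  let ?sa = "rep x a" and ?sb = "rep x b"
  define k where "k = ?sa \<cdot> S.iv ?sa \<cdot> (?sb \<cdot> S.iv ?sb)"
  have kE: "k \<in> S.E" unfolding k_def by (simp add: S.idem_mult)
  have "k \<cdot> (?sa \<cdot> S.iv ?sa) = k" unfolding k_def by (rule S.idem_absorb) simp_all
  then have range: "k \<cdot> ?sa \<cdot> S.iv (k \<cdot> ?sa) = k" by (rule S.range_idem_mult[OF kE])
  have "a \<odot> b \<in> grp_comp mA (\<alpha> k)"
    unfolding k_def alpha_mult[OF S.range_idem S.range_idem]
    by (rule A.grp_comp_mult[OF in_grp_comp_rep[OF x a] in_grp_comp_rep[OF x b]])
  moreover have "k \<cdot> ?sa \<in> x"
    using S.GS_closed[OF x rep_in_class[OF x a] S.min_group_cong_left_idem[OF kE]] .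
  ultimately show ?thesis using DomI range by simp
qed

definition class_compatible :: "'s set \<Rightarrow> ('s \<Rightarrow> 'a) \<Rightarrow> bool" where
  "class_compatible x h \<longleftrightarrow> (\<forall>s. h s \<in> grp_comp mA (\<alpha> (s \<cdot> S.iv s))) \<and>
     (\<forall>s\<in>x. \<forall>t\<in>x. \<alpha> (s \<cdot> S.iv s \<cdot> (t \<cdot> S.iv t)) \<odot> h s = \<alpha> (s \<cdot> S.iv s \<cdot> (t \<cdot> S.iv t)) \<odot> h t)"

definition class_multiplier :: "('s \<Rightarrow> 'a) \<Rightarrow> 's set \<Rightarrow> ('a \<Rightarrow> 'a) \<times> ('a \<Rightarrow> 'a)" where
  "class_multiplier h x = (\<lambda>a. h (rep x a) \<odot> a, \<lambda>a. a \<odot> h (rep x a))"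

lemma class_compatible_grp_comp: "class_compatible x h \<Longrightarrow> h s \<in> grp_comp mA (\<alpha> (s \<cdot> S.iv s))"
  unfolding class_compatible_def by blast

lemma class_compatible_below:
  assumes h: "class_compatible x h" and "s \<in> x" "t \<in> x"
    and below: "t \<cdot> S.iv t \<cdot> (s \<cdot> S.iv s) = t \<cdot> S.iv t"
  shows "h t = \<alpha> (t \<cdot> S.iv t) \<odot> h s"
proof -
  have "\<alpha> (t \<cdot> S.iv t \<cdot> (s \<cdot> S.iv s)) \<odot> h t = \<alpha> (t \<cdot> S.iv t \<cdot> (s \<cdot> S.iv s)) \<odot> h s"
    using h assms(2,3) unfolding class_compatible_def by blast
  then show ?thesis using A.grp_comp_left_unit[OF class_compatible_grp_comp[OF h]] below by simp
qed

lemma class_multiplier_is_multiplier: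
  assumes x: "x \<in> GS mS" and h: "class_compatible x h"
  shows "is_multiplier mA (Dom mS mA \<alpha> x) (class_multiplier h x)"
  unfolding class_multiplier_def
proof (rule A.local_units_multiplier)
  note unit = class_compatible_grp_comp[OF h]
  fix a assume a: "a \<in> Dom mS mA \<alpha> x"
  show "h (rep x a) \<in> grp_comp mA (a \<odot> A.iv a)" using unit range_alpha_rep[OF x a] by metis
  show "h (rep x a) \<odot> a \<in> Dom mS mA \<alpha> x \<and> a \<odot> h (rep x a) \<in> Dom mS mA \<alpha> x"
    using DomI[OF rep_in_class[OF x a] A.grp_comp_mult_same[OF unit in_grp_comp_rep[OF x a]]]
      DomI[OF rep_in_class[OF x a] A.grp_comp_mult_same[OF in_grp_comp_rep[OF x a] unit]] ..
  fix b assume b: "b \<in> Dom mS mA \<alpha> x"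
  let ?u = "rep x (a \<odot> b)" and ?sa = "rep x a" and ?sb = "rep x b"
  let ?ru = "?u \<cdot> S.iv ?u" and ?ra = "?sa \<cdot> S.iv ?sa" and ?rb = "?sb \<cdot> S.iv ?sb"
  have ab: "a \<odot> b \<in> Dom mS mA \<alpha> x" using Dom_mult_closed[OF x a b] .
  have "\<alpha> ?ru = a \<odot> b \<odot> A.iv (a \<odot> b)" using range_alpha_rep[OF x ab] .
  also have "\<dots> = a \<odot> A.iv a \<odot> (b \<odot> A.iv b)"
    using A.grp_comp_right_inv[OF A.grp_comp_mult[OF A.grp_comp_range A.grp_comp_range]] .
  finally have ru_alpha: "\<alpha> ?ru = a \<odot> A.iv a \<odot> (b \<odot> A.iv b)" .
  also have "\<dots> = \<alpha> (?ra \<cdot> ?rb)"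
    using range_alpha_rep[OF x a] range_alpha_rep[OF x b] alpha_mult[OF S.range_idem S.range_idem]
    by simp
  finally have "?ru = ?ra \<cdot> ?rb"
    by (rule alpha_inj[OF S.range_idem S.idem_mult[OF S.range_idem S.range_idem]])
  then have "?ru \<cdot> ?ra = ?ru" "?ru \<cdot> ?rb = ?ru"
    using S.idem_absorb[OF S.range_idem S.range_idem] by simp_all
  then have "h ?u = \<alpha> ?ru \<odot> h ?sa" "h ?u = \<alpha> ?ru \<odot> h ?sb"
    using class_compatible_below[OF h _ rep_in_class[OF x ab]] rep_in_class[OF x a] rep_in_class[OF x b]
    by blast+
  then show "h ?u = a \<odot> A.iv a \<odot> (b \<odot> A.iv b) \<odot> h ?sa \<and> h ?u = a \<odot> A.iv a \<odot> (b \<odot> A.iv b) \<odot> h ?sb"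
    using ru_alpha by simp
qed

lemma class_multiplier_apply:
  assumes "x \<in> GS mS" "s \<in> x" "a \<in> grp_comp mA (\<alpha> (s \<cdot> S.iv s))"
  shows "fst (class_multiplier h x) a = h s \<odot> a" "snd (class_multiplier h x) a = a \<odot> h s"
  unfolding class_multiplier_def using rep_eq[OF assms] by simp_all

lemma Dom_GS_inv_elim:
  assumes "x \<in> GS mS" "a \<in> Dom mS mA \<alpha> (GS_inv mS x)"
  obtains u where "u \<in> x" "a \<in> grp_comp mA (\<alpha> (S.iv u \<cdot> u))"
proof -
  obtain t where "t \<in> GS_inv mS x" "a \<in> grp_comp mA (\<alpha> (t \<cdot> S.iv t))" using assms(2) Dom_iff by blast
  then show ?thesis using that[of "S.iv t"] S.GS_inv_mem[OF assms(1)] by simp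
qed

lemma setmul_Dom_elim:
  assumes x: "x \<in> GS mS" and y: "y \<in> GS mS"
    and a: "a \<in> setmul mA (Dom mS mA \<alpha> (GS_inv mS x)) (Dom mS mA \<alpha> y)"
  obtains s v where "s \<in> x" "v \<in> y" "S.iv s \<cdot> s = v \<cdot> S.iv v" "a \<in> grp_comp mA (\<alpha> (v \<cdot> S.iv v))"
proof -
  obtain b c where bc: "a = b \<odot> c" "b \<in> Dom mS mA \<alpha> (GS_inv mS x)" "c \<in> Dom mS mA \<alpha> y"
    using a unfolding setmul_def by blast
  obtain u where u: "u \<in> x" "b \<in> grp_comp mA (\<alpha> (S.iv u \<cdot> u))" using Dom_GS_inv_elim[OF x bc(2)] .
  obtain v where v: "v \<in> y" "c \<in> grp_comp mA (\<alpha> (v \<cdot> S.iv v))" using bc(3) Dom_iff by blast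
  define e where "e = S.iv u \<cdot> u \<cdot> (v \<cdot> S.iv v)"
  have eE: "e \<in> S.E" unfolding e_def by (simp add: S.idem_mult)
  have eu: "e \<cdot> (S.iv u \<cdot> u) = e" unfolding e_def by (rule S.idem_absorb) simp_all
  have ev: "e \<cdot> (v \<cdot> S.iv v) = e" unfolding e_def by (rule S.idem_absorb) simp_all
  have "u \<cdot> e \<in> x" using S.GS_closed[OF x u(1) S.min_group_cong_right_idem[OF eE]] .
  moreover have "e \<cdot> v \<in> y" using S.GS_closed[OF y v(1) S.min_group_cong_left_idem[OF eE]] .
  moreover have "S.iv (u \<cdot> e) \<cdot> (u \<cdot> e) = e"
    using eu S.idem_sq[OF eE] S.idem_comm[OF eE S.domain_idem[of u]]
    by (simp add: S.inv_mult S.idem_inv[OF eE] S.assoc)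
  moreover have "e \<cdot> v \<cdot> S.iv (e \<cdot> v) = e" using S.range_idem_mult[OF eE ev] .
  moreover have "a \<in> grp_comp mA (\<alpha> e)"
    unfolding bc(1) e_def alpha_mult[OF S.domain_idem S.range_idem] using A.grp_comp_mult[OF u(2) v(2)] .
  ultimately show ?thesis using that by metis
qed

end

locale equivalent_sieben_modules =
  E_unitary_sieben_module mS mA \<alpha> lam f + M': sieben_module mS mA \<alpha>' lam' f'
  for mS :: "'s \<Rightarrow> 's \<Rightarrow> 's" (infixl "\<cdot>" 70) and mA :: "'a \<Rightarrow> 'a \<Rightarrow> 'a" (infixl "\<odot>" 70)
    and \<alpha> lam f \<alpha>' lam' f' +
  fixes g :: "'s \<Rightarrow> 'a"
  assumes alpha'_eq: "e \<in> S.E \<Longrightarrow> \<alpha>' e = \<alpha> e"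
    and g_grp_comp: "g s \<in> grp_comp mA (\<alpha> (s \<cdot> S.iv s))"
    and lam'_eq: "lam' s a = g s \<odot> lam s a \<odot> A.iv (g s)"
    and f'_eq: "f' s t \<odot> g (s \<cdot> t) = g s \<odot> lam s (g t) \<odot> f s t"
begin

lemma Dom_alpha': "Dom mS mA \<alpha>' = Dom mS mA \<alpha>"
  unfolding Dom_def using alpha'_eq[OF S.range_idem] by (intro ext) simp

lemma theta_alpha': "theta mS mA \<alpha>' L = theta mS mA \<alpha> L"
  unfolding theta_def using alpha'_eq[OF S.domain_idem] by (intro ext) simp

lemma wmult_alpha': "wmult mS mA \<alpha>' F = wmult mS mA \<alpha> F"
  unfolding wmult_def using alpha'_eq[OF S.range_idem] by (intro ext) simp

lemma f'_grp_comp: "f' s t \<in> grp_comp mA (\<alpha> (s \<cdot> t \<cdot> S.iv (s \<cdot> t)))"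
  using M'.f_grp_comp alpha'_eq[OF S.range_idem] by metis

text \<open>In \<open>f'(e,e) g(e) = g(e) \<lambda>\<^sub>e(g(e)) f(e,e)\<close> both values of \<open>f\<close> are the identity
  \<open>\<alpha>(e)\<close> of the group containing \<open>g(e)\<close>, so \<open>g(e)\<close> is idempotent there.\<close>
lemma g_idem: assumes e: "e \<in> S.E" shows "g e = \<alpha> e"
proof -
  have ee: "e \<cdot> e = e" and iv: "S.iv e = e" using S.idem_sq[OF e] S.idem_inv[OF e] .
  have ge: "g e \<in> grp_comp mA (\<alpha> e)" using g_grp_comp[of e] ee iv by simp
  have "f' e e = \<alpha> e" using M'.f_idem_left[OF e, of e] alpha'_eq[OF e] ee iv by simp
  moreover have "f e e = \<alpha> e" using f_idem_left[OF e, of e] ee iv by simp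
  ultimately have "g e = g e \<odot> g e \<odot> \<alpha> e"
    using f'_eq[of e e] lam_idem[OF e] A.grp_comp_left_unit[OF ge] ee by (simp add: A.assoc)
  also have "\<dots> = g e \<odot> g e"
    using A.grp_comp_right_unit[OF A.grp_comp_mult_same[OF ge ge]] by simp
  finally show ?thesis using A.grp_comp_idem_eq[OF ge] by simp
qed

lemma g_restrict: assumes e: "e \<in> S.E" shows "g (e \<cdot> s) = \<alpha> (e \<cdot> (s \<cdot> S.iv s)) \<odot> g s"
proof -
  let ?p = "e \<cdot> (s \<cdot> S.iv s)"
  have pE: "?p \<in> S.E" using S.idem_mult[OF e S.range_idem] .
  have gp: "g (e \<cdot> s) \<in> grp_comp mA (\<alpha> ?p)" using g_grp_comp[of "e \<cdot> s"] S.range_idem_left[OF e] by simp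
  have "f' e s = \<alpha> ?p" using M'.f_idem_left[OF e] alpha'_eq[OF pE] by (simp add: S.assoc)
  moreover have "f e s = \<alpha> ?p" using f_idem_left[OF e] by (simp add: S.assoc)
  ultimately have "g (e \<cdot> s) = \<alpha> e \<odot> (\<alpha> e \<odot> g s) \<odot> \<alpha> ?p"
    using f'_eq[of e s] lam_idem[OF e] g_idem[OF e] A.grp_comp_left_unit[OF gp] by simp
  also have "\<dots> = \<alpha> ?p \<odot> \<alpha> e \<odot> g s"
    using A.idem_sq'[OF alpha_idem[OF e]] A.idem_central[OF alpha_idem[OF pE]] by (simp add: A.assoc)
  also have "\<alpha> ?p \<odot> \<alpha> e = \<alpha> ?p"
    using alpha_mult[OF pE e] S.idem_absorb(1)[OF e S.range_idem] by (simp add: S.assoc)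
  finally show ?thesis .
qed

lemma g_class_compatible: assumes x: "x \<in> GS mS" shows "class_compatible x g"
  unfolding class_compatible_def
proof (intro conjI allI ballI g_grp_comp)
  fix s t assume s: "s \<in> x" and t: "t \<in> x"
  let ?k = "s \<cdot> S.iv s \<cdot> (t \<cdot> S.iv t)"
  have kE: "?k \<in> S.E" by (simp add: S.idem_mult)
  have "?k \<cdot> (s \<cdot> S.iv s) = ?k" "?k \<cdot> (t \<cdot> S.iv t) = ?k" by (rule S.idem_absorb; simp)+
  then show "\<alpha> ?k \<odot> g s = \<alpha> ?k \<odot> g t"
    using g_restrict[OF kE, of s] g_restrict[OF kE, of t] S.GS_restrictions_eq[OF x s t] by simp
qed

lemma g_inv_class_compatible:
  assumes x: "x \<in> GS mS" shows "class_compatible x (\<lambda>s. A.iv (g s))"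
  unfolding class_compatible_def
proof (intro conjI allI ballI A.grp_comp_inv[OF g_grp_comp])
  fix s t assume s: "s \<in> x" and t: "t \<in> x"
  let ?k = "\<alpha> (s \<cdot> S.iv s \<cdot> (t \<cdot> S.iv t))"
  have kE: "?k \<in> A.E" using alpha_idem S.idem_mult S.range_idem by blast
  have "?k \<odot> g s = ?k \<odot> g t"
    using g_class_compatible[OF x] s t unfolding class_compatible_def by blast
  then have "A.iv (?k \<odot> g s) = A.iv (?k \<odot> g t)" by simp
  then show "?k \<odot> A.iv (g s) = ?k \<odot> A.iv (g t)"
    using A.idem_central[OF kE] by (simp add: A.inv_mult A.idem_inv[OF kE])
qed

lemma g_class_multiplier_unit:
  assumes x: "x \<in> GS mS"
  shows "is_unit_multiplier_with_inv mA (Dom mS mA \<alpha> x)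
           (class_multiplier g x) (class_multiplier (\<lambda>s. A.iv (g s)) x)"
  unfolding is_unit_multiplier_with_inv_def
proof (intro conjI ballI class_multiplier_is_multiplier[OF x]
    g_class_compatible[OF x] g_inv_class_compatible[OF x])
  fix a assume a: "a \<in> Dom mS mA \<alpha> x"
  let ?s = "rep x a"
  have s: "?s \<in> x" and ga: "a \<in> grp_comp mA (\<alpha> (?s \<cdot> S.iv ?s))"
    using rep_in_class[OF x a] in_grp_comp_rep[OF x a] .
  have gs: "g ?s \<in> grp_comp mA (\<alpha> (?s \<cdot> S.iv ?s))" by (rule g_grp_comp)
  note gi = A.grp_comp_inv[OF gs]
  note on_class = class_multiplier_apply[OF x s]
  show "fst (class_multiplier g x) (fst (class_multiplier (\<lambda>s. A.iv (g s)) x) a) = a"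
    using on_class[OF A.grp_comp_mult_same[OF gi ga]] on_class[OF ga]
      A.grp_comp_right_inv'[OF gs] A.grp_comp_left_unit[OF ga] by simp
  show "fst (class_multiplier (\<lambda>s. A.iv (g s)) x) (fst (class_multiplier g x) a) = a"
    using on_class[OF A.grp_comp_mult_same[OF gs ga]] on_class[OF ga]
      A.grp_comp_left_inv'[OF gs] A.grp_comp_left_unit[OF ga] by simp
  show "snd (class_multiplier g x) (snd (class_multiplier (\<lambda>s. A.iv (g s)) x) a) = a"
    using on_class[OF A.grp_comp_mult_same[OF ga gi]] on_class[OF ga]
      A.grp_comp_left_inv[OF gs] A.grp_comp_right_unit[OF ga] by (simp add: A.assoc)
  show "snd (class_multiplier (\<lambda>s. A.iv (g s)) x) (snd (class_multiplier g x) a) = a"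
    using on_class[OF A.grp_comp_mult_same[OF ga gs]] on_class[OF ga]
      A.grp_comp_right_inv[OF gs] A.grp_comp_right_unit[OF ga] by (simp add: A.assoc)
qed

lemma theta_conjugate:
  assumes x: "x \<in> GS mS" and a: "a \<in> Dom mS mA \<alpha> (GS_inv mS x)"
  shows "theta mS mA \<alpha> lam' x a =
    snd (class_multiplier (\<lambda>s. A.iv (g s)) x) (fst (class_multiplier g x) (theta mS mA \<alpha> lam x a))"
proof -
  obtain u where u: "u \<in> x" "a \<in> grp_comp mA (\<alpha> (S.iv u \<cdot> u))" using Dom_GS_inv_elim[OF x a] .
  have l: "lam u a \<in> grp_comp mA (\<alpha> (u \<cdot> S.iv u))" using lam_grp_comp[OF u(2)] .
  note on_class = class_multiplier_apply[OF x u(1)]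
  show ?thesis
    using theta_eq[OF x u] on_class[OF l] on_class[OF A.grp_comp_mult_same[OF g_grp_comp l]] lam'_eq by simp
qed

text \<open>On the component of the composable pair \<open>(s, v)\<close>, both sides reduce to
  \<open>g(s) \<lambda>\<^sub>s(a) \<lambda>\<^sub>s(g(v)) f(s,v)\<close>; for the left side this is the relation between \<open>f\<close>
  and \<open>f'\<close>.\<close>
lemma wmult_twisted:
  assumes x: "x \<in> GS mS" and y: "y \<in> GS mS" and s: "s \<in> x" and v: "v \<in> y"
    and sv: "S.iv s \<cdot> s = v \<cdot> S.iv v" and a: "a \<in> grp_comp mA (\<alpha> (v \<cdot> S.iv v))"
  shows "snd (class_multiplier g (GS_mult mS x y))
           (snd (wmult mS mA \<alpha> f' x y) (theta mS mA \<alpha> lam' x a)) =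
         fst (class_multiplier g x)
           (snd (wmult mS mA \<alpha> f x y) (theta mS mA \<alpha> lam x (snd (class_multiplier g y) a)))"
proof -
  let ?P = "\<alpha> (s \<cdot> S.iv s)"
  have xy: "s \<cdot> v \<in> GS_mult mS x y" using S.GS_mult_mem[OF x y s v] .
  have "s \<cdot> v \<cdot> S.iv (s \<cdot> v) = s \<cdot> (S.iv s \<cdot> s) \<cdot> S.iv s"
    unfolding sv by (simp add: S.inv_mult S.assoc)
  then have range: "s \<cdot> v \<cdot> S.iv (s \<cdot> v) = s \<cdot> S.iv s" by simp
  have cancel: "S.iv s \<cdot> (s \<cdot> v) = v" using sv by (metis S.assoc S.inv_right_cancel)
  have a': "a \<in> grp_comp mA (\<alpha> (S.iv s \<cdot> s))" using a sv by simp
  have ag: "a \<odot> g v \<in> grp_comp mA (\<alpha> (S.iv s \<cdot> s))"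
    using A.grp_comp_mult_same[OF a g_grp_comp] sv by simp
  have la: "lam s a \<in> grp_comp mA ?P" using lam_grp_comp[OF a'] .
  have lag: "lam s (a \<odot> g v) \<in> grp_comp mA ?P" using lam_grp_comp[OF ag] .
  have l'a: "lam' s a \<in> grp_comp mA ?P"
    unfolding lam'_eq
    using A.grp_comp_mult_same[OF A.grp_comp_mult_same[OF g_grp_comp la] A.grp_comp_inv[OF g_grp_comp]] .
  have fs: "f s v \<in> grp_comp mA ?P" and f's: "f' s v \<in> grp_comp mA ?P"
    using f_grp_comp[of s v] f'_grp_comp[of s v] range by simp_all
  have "fst (class_multiplier g x)
      (snd (wmult mS mA \<alpha> f x y) (theta mS mA \<alpha> lam x (snd (class_multiplier g y) a)))
      = g s \<odot> (lam s a \<odot> lam s (g v) \<odot> f s v)"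
    using class_multiplier_apply(2)[OF y v a] theta_eq[OF x s ag]
      wmult_snd[OF x y s xy lag lag[folded range]] range cancel
      class_multiplier_apply(1)[OF x s A.grp_comp_mult_same[OF lag fs]] by (simp add: lam_mult)
  moreover have "lam' s a \<odot> f' s v \<odot> g (s \<cdot> v) = g s \<odot> (lam s a \<odot> lam s (g v) \<odot> f s v)"
  proof -
    have "lam' s a \<odot> f' s v \<odot> g (s \<cdot> v) =
        g s \<odot> (lam s a \<odot> (A.iv (g s) \<odot> (g s \<odot> (lam s (g v) \<odot> f s v))))"
      unfolding lam'_eq A.assoc f'_eq[unfolded A.assoc] ..
    also have "\<dots> = g s \<odot> (lam s a \<odot> lam s (g v) \<odot> f s v)"
      using A.grp_comp_left_inv'[OF g_grp_comp] A.grp_comp_right_unit'[OF la] by (simp add: A.assoc)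
    finally show ?thesis .
  qed
  moreover have "snd (class_multiplier g (GS_mult mS x y))
      (snd (wmult mS mA \<alpha> f' x y) (theta mS mA \<alpha> lam' x a))
      = lam' s a \<odot> f' s v \<odot> g (s \<cdot> v)"
    using theta_eq[OF x s a'] wmult_snd[OF x y s xy l'a l'a[folded range]] range cancel
      class_multiplier_apply(2)[OF S.GS_mult_in_GS xy] A.grp_comp_mult_same[OF l'a f's] by simp
  ultimately show ?thesis by simp
qed

lemma equiv_tpa:
  "equiv_tpa mA (GS mS) (GS_mult mS) (GS_inv mS)
     (Dom mS mA \<alpha>) (theta mS mA \<alpha> lam) (wmult mS mA \<alpha> f)
     (Dom mS mA \<alpha>') (theta mS mA \<alpha>' lam') (wmult mS mA \<alpha>' f')"
  unfolding equiv_tpa_def Dom_alpha' theta_alpha' wmult_alpha'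
proof (intro conjI ballI refl exI)
  fix x assume x: "x \<in> GS mS"
  show "is_unit_multiplier_with_inv mA (Dom mS mA \<alpha> x)
          (class_multiplier g x) (class_multiplier (\<lambda>s. A.iv (g s)) x)"
    using g_class_multiplier_unit[OF x] .
  show "theta mS mA \<alpha> lam' x a =
      snd (class_multiplier (\<lambda>s. A.iv (g s)) x) (fst (class_multiplier g x) (theta mS mA \<alpha> lam x a))"
    if "a \<in> Dom mS mA \<alpha> (GS_inv mS x)" for a
    using theta_conjugate[OF x that] .
  fix y a assume y: "y \<in> GS mS" and a: "a \<in> setmul mA (Dom mS mA \<alpha> (GS_inv mS x)) (Dom mS mA \<alpha> y)"
  then obtain s v where "s \<in> x" "v \<in> y" "S.iv s \<cdot> s = v \<cdot> S.iv v" "a \<in> grp_comp mA (\<alpha> (v \<cdot> S.iv v))"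
    using setmul_Dom_elim[OF x] by blast
  then show "snd (class_multiplier g (GS_mult mS x y))
        (snd (wmult mS mA \<alpha> f' x y) (theta mS mA \<alpha> lam' x a)) =
      fst (class_multiplier g x)
        (snd (wmult mS mA \<alpha> f x y) (theta mS mA \<alpha> lam x (snd (class_multiplier g y) a)))"
    by (rule wmult_twisted[OF x y])
qed

end

theorem proposition6p13:
  fixes mS :: "'s \<Rightarrow> 's \<Rightarrow> 's" and mA :: "'a \<Rightarrow> 'a \<Rightarrow> 'a"
    and \<alpha> \<alpha>' :: "'s \<Rightarrow> 'a" and lam lam' :: "'s \<Rightarrow> 'a \<Rightarrow> 'a" and f f' :: "'s \<Rightarrow> 's \<Rightarrow> 'a"
  assumes "E_unitary mS"
    and "semilattice_of_groups mA"
    and "sieben_twisted_module mS mA \<alpha> lam f"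
    and "sieben_twisted_module mS mA \<alpha>' lam' f'"
    and "equiv_twisted_modules mS mA \<alpha> lam f \<alpha>' lam' f'"
  shows "equiv_tpa mA (GS mS) (GS_mult mS) (GS_inv mS)
           (Dom mS mA \<alpha>) (theta mS mA \<alpha> lam) (wmult mS mA \<alpha> f)
           (Dom mS mA \<alpha>') (theta mS mA \<alpha>' lam') (wmult mS mA \<alpha>' f')"
proof -
  obtain g where g: "\<forall>e\<in>idems mS. \<alpha>' e = \<alpha> e"
    "\<forall>s. g s \<in> grp_comp mA (\<alpha> (mS s (sinv mS s)))"
    "\<forall>s a. lam' s a = mA (mA (g s) (lam s a)) (sinv mA (g s))"
    "\<forall>s t. mA (f' s t) (g (mS s t)) = mA (mA (g s) (lam s (g t))) (f s t)"
    using assms(5) unfolding equiv_twisted_modules_def by blast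
  interpret equivalent_sieben_modules mS mA \<alpha> lam f \<alpha>' lam' f' g
    by unfold_locales
      (use assms g in \<open>auto simp: E_unitary_def semilattice_of_groups_def\<close>)
  show ?thesis by (rule equiv_tpa)
qed

end
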